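(* Let $r_{\mathrm{free}}$ be the number of generators of the torsion-free part of the $\mathbb{Z}_2[[q]]$-module $H^*(C_{\mathrm{borel}},d_{\mathrm{borel}})$ and $r_{\mathrm{tor}}$ the number of generators of its torsion part. Then $$r_{\mathrm{free}}+2r_{\mathrm{tor}}=\dim_{\mathbb{Z}_2}H^*(C,d).$$
   Context: $M$ is a closed smooth manifold with an involution $\iota$, $f$ an $\iota$-invariant Morse function with $\iota$-invariant metric such that the gradient flows of $f$ and $f|M^{\mathrm{inv}}$ are Morse–Smale and there is a constant $i_{\mathrm{anti}}$ with $i_M(x)=i_{M^{\mathrm{inv}}}(x)+i_{\mathrm{anti}}$ for every $\iota$-invariant critical point $x$ ($M^{\mathrm{inv}}$ the fixed set, $i$ Morse indices). $(C,d)$ is the $\mathbb{Z}_2$ Morse cochain complex of $f$, $\iota_{\mathrm{morse}}:C\to C$ the chain map sending a critical point $x$ to $\iota(x)$. $C_{\mathrm{borel}}=C[[q]]=C\otimes\mathbb{Z}_2[[q]]$ with $q$ of degree $1$, and $d_{\mathrm{borel}}=d+(\iota_{\mathrm{morse}}-\mathrm{id})q$, extended $\mathbb{Z}_2[[q]]$-linearly. *)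

theory Defs
  imports "HOL-Library.Z2" "HOL-Computational_Algebra.Formal_Power_Series"
begin

text \<open>Cochains with coefficients in a commutative ring R on a finite set of critical
  points (a finite type 'c) are functions 'c => R; a critical point x is the indicator
  function of x.  A differential is given by its coefficient matrix A, where A x y is the
  coefficient of y in d x.\<close>

definition mat_apply :: "('c::finite \<Rightarrow> 'c \<Rightarrow> 'r::comm_ring_1) \<Rightarrow> ('c \<Rightarrow> 'r) \<Rightarrow> ('c \<Rightarrow> 'r)" where
  "mat_apply A v = (\<lambda>y. \<Sum>x\<in>UNIV. A x y * v x)"

definition rspan :: "('c \<Rightarrow> 'r::comm_ring_1) set \<Rightarrow> ('c \<Rightarrow> 'r) set" where
  "rspan G = {(\<lambda>x. \<Sum>g\<in>F. c g * g x) | F c. finite F \<and> F \<subseteq> G}"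

text \<open>Minimal number of generators of the R-module M/N (for submodules N of M).\<close>
definition min_gens :: "('c \<Rightarrow> 'r::comm_ring_1) set \<Rightarrow> ('c \<Rightarrow> 'r) set \<Rightarrow> nat" where
  "min_gens M N = (LEAST n. \<exists>G. finite G \<and> card G = n \<and> G \<subseteq> M \<and>
       M \<subseteq> {(\<lambda>x. u x + w x) | u w. u \<in> rspan G \<and> w \<in> N})"

definition morse_d :: "('c::finite \<Rightarrow> 'c \<Rightarrow> bit) \<Rightarrow> ('c \<Rightarrow> bit) \<Rightarrow> ('c \<Rightarrow> bit)" where
  "morse_d A = mat_apply A"

text \<open>iota_morse sends the critical point x to iota x; on coefficient functions this is
  v |-> v o iota (iota being an involution).\<close>
definition iota_morse :: "('c \<Rightarrow> 'c) \<Rightarrow> ('c \<Rightarrow> 'r) \<Rightarrow> ('c \<Rightarrow> 'r)" where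
  "iota_morse \<iota> v = v \<circ> \<iota>"

definition borel_d :: "('c::finite \<Rightarrow> 'c \<Rightarrow> bit) \<Rightarrow> ('c \<Rightarrow> 'c) \<Rightarrow> ('c \<Rightarrow> bit fps) \<Rightarrow> ('c \<Rightarrow> bit fps)" where
  "borel_d A \<iota> v = (\<lambda>y. mat_apply (\<lambda>x z. fps_const (A x z)) v y
                       + (iota_morse \<iota> v y - v y) * fps_X)"

definition borel_cocycles where "borel_cocycles A \<iota> = {v. borel_d A \<iota> v = (\<lambda>_. 0)}"
definition borel_coboundaries where "borel_coboundaries A \<iota> = range (borel_d A \<iota>)"

text \<open>Torsion part of H^*(C_borel, d_borel), as a set of representing cocycles.\<close>
definition borel_torsion where
  "borel_torsion A \<iota> = {v \<in> borel_cocycles A \<iota>.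
      \<exists>a::bit fps. a \<noteq> 0 \<and> (\<lambda>x. a * v x) \<in> borel_coboundaries A \<iota>}"

definition r_free where
  "r_free A \<iota> = min_gens (borel_cocycles A \<iota>) (borel_torsion A \<iota>)"
definition r_tor where
  "r_tor A \<iota> = min_gens (borel_torsion A \<iota>) (borel_coboundaries A \<iota>)"

text \<open>dim over Z_2 of H^*(C,d) (minimal spanning set = dimension).\<close>
definition dim_morse_cohomology where
  "dim_morse_cohomology A = min_gens {v. morse_d A v = (\<lambda>_. 0)} (range (morse_d A))"

end

theory Submission
  imports Defs "HOL-Library.FuncSet"
begin

text \<open>Over the discrete valuation ring \<open>\<int>/2[[q]]\<close> the matrix of the Borel differential
  is similar to a normal form, which pairs some basis elements by a single nonzero entry and
  leaves the others unpaired: Gaussian elimination works when one always pivots on an entry of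
  minimal \<open>q\<close>-adic valuation. For a normal form, the unpaired elements generate the free part
  of the cohomology and the targets of the entries divisible by \<open>q\<close> generate the torsion.
  Setting \<open>q = 0\<close> turns the Borel differential into \<open>d\<close> and the normal form into a normal
  form of \<open>d\<close>, in which every entry divisible by \<open>q\<close> has disappeared and left two unpaired
  elements behind.\<close>

unbundle fps_syntax

definition mat_mult :: "('c::finite \<Rightarrow> 'c \<Rightarrow> 'r::comm_ring_1) \<Rightarrow> ('c \<Rightarrow> 'c \<Rightarrow> 'r) \<Rightarrow> ('c \<Rightarrow> 'c \<Rightarrow> 'r)" where
  "mat_mult X Y = (\<lambda>x z. \<Sum>y\<in>UNIV. X x y * Y y z)"

definition mat_one :: "'c \<Rightarrow> 'c \<Rightarrow> 'r::comm_ring_1" where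
  "mat_one = (\<lambda>x y. of_bool (x = y))"

lemma sum_UNIV_single:
  assumes "\<And>x. x \<noteq> s \<Longrightarrow> f x = 0"
  shows "(\<Sum>x\<in>(UNIV::'c::finite set). f x) = f s"
proof -
  have "(\<Sum>x\<in>UNIV. f x) = f s + (\<Sum>x\<in>UNIV - {s}. f x)" by (simp add: sum.remove)
  also have "(\<Sum>x\<in>UNIV - {s}. f x) = 0" using assms by (intro sum.neutral) auto
  finally show ?thesis by simp
qed

lemma mat_one_simps [simp]: "mat_one a a = 1" "a \<noteq> b \<Longrightarrow> mat_one a b = 0"
  unfolding mat_one_def by auto

lemma sum_mat_one_left: "(\<Sum>y\<in>UNIV. mat_one (a::'c::finite) y * f y) = (f a :: 'r::comm_ring_1)"
  by (subst sum_UNIV_single[of a]) simp_all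

lemma sum_mat_one_left': "(\<Sum>y\<in>UNIV. mat_one y (a::'c::finite) * f y) = (f a :: 'r::comm_ring_1)"
  by (subst sum_UNIV_single[of a]) (simp_all add: mat_one_def)

lemma sum_mat_one_right: "(\<Sum>y\<in>UNIV. f y * mat_one y (a::'c::finite)) = (f a :: 'r::comm_ring_1)"
  by (subst sum_UNIV_single[of a]) simp_all

lemma sum_mat_one_right': "(\<Sum>y\<in>UNIV. f y * mat_one (a::'c::finite) y) = (f a :: 'r::comm_ring_1)"
  by (subst sum_UNIV_single[of a]) (simp_all add: mat_one_def)

lemma sum_mat_one_mid: "(\<Sum>y\<in>UNIV. f y * (mat_one y (a::'c::finite) * c)) = (f a * c :: 'r::comm_ring_1)"
  using sum_mat_one_right[of "\<lambda>y. f y * c" a] by (simp add: ac_simps)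

lemma sum_mat_one_mid': "(\<Sum>y\<in>UNIV. f y * (mat_one (a::'c::finite) y * c)) = (f a * c :: 'r::comm_ring_1)"
  using sum_mat_one_right'[of "\<lambda>y. f y * c" a] by (simp add: ac_simps)

lemmas sum_mat_one = sum_mat_one_left sum_mat_one_left' sum_mat_one_right sum_mat_one_right'
  sum_mat_one_mid sum_mat_one_mid'

lemma mat_mult_assoc: "mat_mult (mat_mult X Y) Z = mat_mult X (mat_mult Y Z)"
  unfolding mat_mult_def
  by (auto simp: sum_distrib_left sum_distrib_right mult.assoc intro!: ext sum.swap)

lemma mat_mult_one_left [simp]: "mat_mult mat_one X = X"
  unfolding mat_mult_def by (simp add: sum_mat_one)

lemma mat_mult_one_right [simp]: "mat_mult X mat_one = X"
  unfolding mat_mult_def by (simp add: sum_mat_one)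

lemma mat_mult_zero_left [simp]: "mat_mult (\<lambda>_ _. 0) X = (\<lambda>_ _. 0)"
  unfolding mat_mult_def by simp

lemma mat_mult_zero_right [simp]: "mat_mult X (\<lambda>_ _. 0) = (\<lambda>_ _. 0)"
  unfolding mat_mult_def by simp

lemma mat_mult_add_left: "mat_mult (\<lambda>x y. A x y + B x y) C = (\<lambda>x y. mat_mult A C x y + mat_mult B C x y)"
  unfolding mat_mult_def by (auto intro!: ext simp: distrib_right sum.distrib)

lemma mat_mult_add_right: "mat_mult C (\<lambda>x y. A x y + B x y) = (\<lambda>x y. mat_mult C A x y + mat_mult C B x y)"
  unfolding mat_mult_def by (auto intro!: ext simp: distrib_left sum.distrib)

lemma mat_mult_cancel_left: "mat_mult A B = mat_one \<Longrightarrow> mat_mult A (mat_mult B X) = X"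
  by (metis mat_mult_assoc mat_mult_one_left)

lemma mat_apply_mat_mult: "mat_apply Y (mat_apply X w) = mat_apply (mat_mult X Y) w"
  unfolding mat_apply_def mat_mult_def
  by (auto simp: sum_distrib_left sum_distrib_right mult.assoc mult.left_commute intro!: ext sum.swap)

lemma mat_apply_mat_one [simp]: "mat_apply mat_one w = w"
  unfolding mat_apply_def by (simp add: sum_mat_one)

lemma mat_apply_zero [simp]: "mat_apply P (\<lambda>_. 0) = (\<lambda>_. 0)"
  unfolding mat_apply_def by simp

lemma mat_apply_sum:
  "mat_apply P (\<lambda>x. \<Sum>g\<in>F. c g * g x) = (\<lambda>y. \<Sum>g\<in>F. c g * mat_apply P g y)"
  unfolding mat_apply_def
  by (auto intro!: ext simp: sum_distrib_left mult.left_commute intro: sum.swap)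

lemma mat_apply_add:
  "mat_apply P (\<lambda>x. u x + w x) = (\<lambda>y. mat_apply P u y + mat_apply P w y)"
  unfolding mat_apply_def by (auto intro!: ext simp: distrib_left sum.distrib)

lemma mat_apply_scale:
  "mat_apply P (\<lambda>x. a * u x) = (\<lambda>y. a * mat_apply P u y)"
  unfolding mat_apply_def by (auto intro!: ext simp: sum_distrib_left mult.left_commute)

lemma mat_apply_inverse:
  assumes "mat_mult P Q = mat_one"
  shows "mat_apply Q (mat_apply P w) = w"
  by (simp add: mat_apply_mat_mult assms)

definition generates :: "('c \<Rightarrow> 'r::comm_ring_1) set \<Rightarrow> ('c \<Rightarrow> 'r) set \<Rightarrow> ('c \<Rightarrow> 'r) set \<Rightarrow> bool" where
  "generates M N G \<longleftrightarrow> finite G \<and> G \<subseteq> M \<and> M \<subseteq> {(\<lambda>x. u x + w x) | u w. u \<in> rspan G \<and> w \<in> N}"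

lemma min_gens_altdef: "min_gens M N = (LEAST n. \<exists>G. generates M N G \<and> card G = n)"
  unfolding min_gens_def generates_def by (simp add: conj_commute conj_left_commute)

lemma min_gens_eqI:
  assumes "generates M N G" and "card G = m" and "\<And>G'. generates M N G' \<Longrightarrow> m \<le> card G'"
  shows "min_gens M N = m"
  unfolding min_gens_altdef
  by (rule Least_equality) (use assms in blast)+

lemma rspan_image:
  assumes inj: "inj L" and lin: "\<And>F c. L (\<lambda>x. \<Sum>g\<in>F. c g * g x) = (\<lambda>y. \<Sum>g\<in>F. c g * L g y)"
    and u: "u \<in> rspan G"
  shows "L u \<in> rspan (L ` G)"
proof -
  from u obtain F c where F: "finite F" "F \<subseteq> G" and ud: "u = (\<lambda>x. \<Sum>g\<in>F. c g * g x)"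
    unfolding rspan_def by blast
  have "L u = (\<lambda>y. \<Sum>g\<in>F. c g * L g y)" using lin ud by simp
  also have "\<dots> = (\<lambda>y. \<Sum>g'\<in>L ` F. c (inv L g') * g' y)"
    using inj by (auto intro!: ext simp: sum.reindex inj_on_def inv_f_f[OF inj])
  finally show ?thesis
    using F unfolding rspan_def by (intro CollectI exI[of _ "L ` F"] exI[of _ "\<lambda>g'. c (inv L g')"]) auto
qed

lemma generates_image:
  assumes inj: "inj L" and lin: "\<And>F c. L (\<lambda>x. \<Sum>g\<in>F. c g * g x) = (\<lambda>y. \<Sum>g\<in>F. c g * L g y)"
    and add: "\<And>u w. L (\<lambda>x. u x + w x) = (\<lambda>y. L u y + L w y)"
    and G: "generates M N G"
  shows "generates (L ` M) (L ` N) (L ` G)"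
  unfolding generates_def
proof (intro conjI)
  show "finite (L ` G)" "L ` G \<subseteq> L ` M" using G unfolding generates_def by auto
  show "L ` M \<subseteq> {(\<lambda>x. u x + w x) | u w. u \<in> rspan (L ` G) \<and> w \<in> L ` N}"
  proof
    fix v assume "v \<in> L ` M"
    then obtain m where m: "m \<in> M" "v = L m" by blast
    then obtain u w where uw: "u \<in> rspan G" "w \<in> N" "m = (\<lambda>x. u x + w x)"
      using G unfolding generates_def by blast
    have "v = (\<lambda>y. L u y + L w y)" using m uw add by simp
    then show "v \<in> {(\<lambda>x. u x + w x) | u w. u \<in> rspan (L ` G) \<and> w \<in> L ` N}"
      using rspan_image[OF inj lin uw(1)] uw(2) by blast
  qed
qed

lemma generates_mat_apply_image:
  assumes QP: "mat_mult P Q = mat_one" and G: "generates M N G"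
  shows "generates (mat_apply P ` M) (mat_apply P ` N) (mat_apply P ` G)"
proof (rule generates_image[OF _ mat_apply_sum mat_apply_add G])
  show "inj (mat_apply P)" by (metis mat_apply_inverse[OF QP] injI)
qed

lemma min_gens_mat_apply_image:
  fixes P Q :: "'c::finite \<Rightarrow> 'c \<Rightarrow> 'r::comm_ring_1"
  assumes PQ: "mat_mult P Q = mat_one" and QP: "mat_mult Q P = mat_one"
  shows "min_gens (mat_apply P ` M) (mat_apply P ` N) = min_gens M N"
proof -
  have card_image_P: "card (mat_apply P ` G) = card G" for G
    by (metis card_image injI mat_apply_inverse[OF PQ] inj_on_subset subset_UNIV)
  have QP_image: "mat_apply Q ` mat_apply P ` S = S" for S
    by (force simp: image_image mat_apply_inverse[OF PQ])
  have "(\<exists>G. generates (mat_apply P ` M) (mat_apply P ` N) G \<and> card G = n) \<longleftrightarrow>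
        (\<exists>G. generates M N G \<and> card G = n)" for n
  proof
    assume "\<exists>G. generates (mat_apply P ` M) (mat_apply P ` N) G \<and> card G = n"
    then obtain G where G: "generates (mat_apply P ` M) (mat_apply P ` N) G" "card G = n" by blast
    have "generates M N (mat_apply Q ` G)"
      using generates_mat_apply_image[OF QP G(1)] unfolding QP_image .
    moreover have "card (mat_apply Q ` G) = n"
      by (metis G(2) card_image injI mat_apply_inverse[OF QP] inj_on_subset subset_UNIV)
    ultimately show "\<exists>G. generates M N G \<and> card G = n" by blast
  next
    assume "\<exists>G. generates M N G \<and> card G = n"
    then show "\<exists>G. generates (mat_apply P ` M) (mat_apply P ` N) G \<and> card G = n"
      using generates_mat_apply_image[OF PQ] card_image_P by blast
  qed
  then show ?thesis unfolding min_gens_altdef by simp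
qed

section \<open>Cohomology of a matrix differential up to similarity\<close>

definition cocycles :: "('c::finite \<Rightarrow> 'c \<Rightarrow> 'r::comm_ring_1) \<Rightarrow> ('c \<Rightarrow> 'r) set" where
  "cocycles D = {v. mat_apply D v = (\<lambda>_. 0)}"

definition coboundaries :: "('c::finite \<Rightarrow> 'c \<Rightarrow> 'r::comm_ring_1) \<Rightarrow> ('c \<Rightarrow> 'r) set" where
  "coboundaries D = range (mat_apply D)"

definition torsion_cocycles :: "('c::finite \<Rightarrow> 'c \<Rightarrow> 'r::comm_ring_1) \<Rightarrow> ('c \<Rightarrow> 'r) set" where
  "torsion_cocycles D = {v \<in> cocycles D. \<exists>a. a \<noteq> 0 \<and> (\<lambda>x. a * v x) \<in> coboundaries D}"

definition similar :: "('c::finite \<Rightarrow> 'c \<Rightarrow> 'r::comm_ring_1) \<Rightarrow> ('c \<Rightarrow> 'c \<Rightarrow> 'r) \<Rightarrow> bool" where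
  "similar D N \<longleftrightarrow> (\<exists>P Q. mat_mult P Q = mat_one \<and> mat_mult Q P = mat_one \<and> mat_mult P D = mat_mult N P)"

lemma image_eq_by_inverse:
  assumes "\<And>v. L (K v) = v" and "\<And>w. L w \<in> S \<longleftrightarrow> w \<in> T"
  shows "S = L ` T"
proof (intro set_eqI iffI)
  fix v assume "v \<in> S"
  then show "v \<in> L ` T" using assms by (metis imageI)
next
  fix v assume "v \<in> L ` T"
  then show "v \<in> S" using assms(2) by blast
qed

lemma similar_cohomology_sets:
  fixes P Q D N :: "'c::finite \<Rightarrow> 'c \<Rightarrow> 'r::comm_ring_1"
  assumes PQ: "mat_mult P Q = mat_one" and QP: "mat_mult Q P = mat_one"
    and comm: "mat_mult P D = mat_mult N P"
  shows "cocycles D = mat_apply P ` cocycles N"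
    and "coboundaries D = mat_apply P ` coboundaries N"
    and "torsion_cocycles D = mat_apply P ` torsion_cocycles N"
proof -
  let ?L = "mat_apply P" and ?K = "mat_apply Q"
  have KL: "?K (?L w) = w" and LK: "?L (?K w) = w" for w
    using mat_apply_inverse[OF PQ] mat_apply_inverse[OF QP] by auto
  have L_eq_iff: "?L u = ?L w \<longleftrightarrow> u = w" for u w by (metis KL)
  have L_comm: "mat_apply D (?L w) = ?L (mat_apply N w)" for w
    by (simp add: mat_apply_mat_mult comm)
  have cocycle: "?L w \<in> cocycles D \<longleftrightarrow> w \<in> cocycles N" for w
    unfolding cocycles_def using L_comm L_eq_iff[of _ "\<lambda>_. 0"] by simp
  have coboundary: "?L w \<in> coboundaries D \<longleftrightarrow> w \<in> coboundaries N" for w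
  proof
    assume "?L w \<in> coboundaries D"
    then obtain u where "mat_apply D u = ?L w" unfolding coboundaries_def by auto
    then have "?L (mat_apply N (?K u)) = ?L w" using L_comm[of "?K u"] LK by simp
    then show "w \<in> coboundaries N" unfolding coboundaries_def L_eq_iff by (metis rangeI)
  next
    assume "w \<in> coboundaries N"
    then obtain u where "mat_apply N u = w" unfolding coboundaries_def by auto
    then show "?L w \<in> coboundaries D" unfolding coboundaries_def using L_comm[of u] by (metis rangeI)
  qed
  have torsion: "?L w \<in> torsion_cocycles D \<longleftrightarrow> w \<in> torsion_cocycles N" for w
  proof -
    have "(\<lambda>x. a * ?L w x) = ?L (\<lambda>x. a * w x)" for a by (simp add: mat_apply_scale)
    then show ?thesis unfolding torsion_cocycles_def using cocycle coboundary by simp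
  qed
  show "cocycles D = ?L ` cocycles N" by (rule image_eq_by_inverse[OF LK cocycle])
  show "coboundaries D = ?L ` coboundaries N" by (rule image_eq_by_inverse[OF LK coboundary])
  show "torsion_cocycles D = ?L ` torsion_cocycles N" by (rule image_eq_by_inverse[OF LK torsion])
qed

lemma min_gens_similar:
  assumes "similar D N"
  shows "min_gens (cocycles D) (torsion_cocycles D) = min_gens (cocycles N) (torsion_cocycles N)"
    and "min_gens (torsion_cocycles D) (coboundaries D) = min_gens (torsion_cocycles N) (coboundaries N)"
    and "min_gens (cocycles D) (coboundaries D) = min_gens (cocycles N) (coboundaries N)"
  using assms unfolding similar_def
  by (auto simp: similar_cohomology_sets min_gens_mat_apply_image)

lemma UNIV_bit: "(UNIV :: bit set) = {0, 1}"
  by (auto intro: bit_not_zero_iff[THEN iffD1])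

instance bit :: finite
  by standard (simp add: UNIV_bit)

lemma card_UNIV_bit: "card (UNIV :: bit set) = 2"
  by (simp add: UNIV_bit)

lemma card_bit_functions_supported_on:
  "card {f :: 'c::finite \<Rightarrow> bit. \<forall>x. x \<notin> X \<longrightarrow> f x = 0} = 2 ^ card X"
proof -
  let ?E = "\<lambda>g x. if x \<in> X then g x else (0::bit)"
  have eq: "{f :: 'c \<Rightarrow> bit. \<forall>x. x \<notin> X \<longrightarrow> f x = 0} = ?E ` (PiE X (\<lambda>_. UNIV))"
  proof (intro set_eqI iffI)
    fix f :: "'c \<Rightarrow> bit" assume f: "f \<in> {f. \<forall>x. x \<notin> X \<longrightarrow> f x = 0}"
    show "f \<in> ?E ` (PiE X (\<lambda>_. UNIV))"
      by (rule image_eqI[where x="restrict f X"]) (use f in \<open>auto intro!: ext\<close>)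
  qed auto
  have "inj_on ?E (PiE X (\<lambda>_. UNIV))"
  proof (rule inj_onI)
    fix g h assume g: "g \<in> PiE X (\<lambda>_. UNIV)" and h: "h \<in> PiE X (\<lambda>_. UNIV)" and e: "?E g = ?E h"
    show "g = h"
    proof
      fix x show "g x = h x"
        using g h fun_cong[OF e, of x] by (cases "x \<in> X") (auto simp: PiE_def extensional_def)
    qed
  qed
  then show ?thesis unfolding eq by (simp add: card_image card_PiE card_UNIV_bit)
qed

lemma card_rspan_bit_le:
  assumes "finite H"
  shows "card (rspan H :: ('c::finite \<Rightarrow> bit) set) \<le> 2 ^ card H"
proof -
  let ?S = "\<lambda>c x. \<Sum>g\<in>H. c g * g x"
  have "rspan H \<subseteq> ?S ` (PiE H (\<lambda>_. UNIV))"
  proof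
    fix u assume "u \<in> rspan H"
    then obtain F c where F: "finite F" "F \<subseteq> H" and u: "u = (\<lambda>x. \<Sum>g\<in>F. c g * g x)"
      unfolding rspan_def by blast
    let ?c = "restrict (\<lambda>g. if g \<in> F then c g else 0) H"
    have "u = ?S ?c"
    proof
      fix x
      have "(\<Sum>g\<in>H. ?c g * g x) = (\<Sum>g\<in>H. (if g \<in> F then c g * g x else 0))"
        by (intro sum.cong) auto
      also have "\<dots> = (\<Sum>g\<in>F. c g * g x)"
        using F assms by (simp add: sum.If_cases Int_absorb1)
      finally show "u x = ?S ?c x" using u by simp
    qed
    then show "u \<in> ?S ` (PiE H (\<lambda>_. UNIV))"
      by (intro image_eqI[where x="?c"]) auto
  qed
  then have "card (rspan H) \<le> card (?S ` (PiE H (\<lambda>_. UNIV)))" by (rule card_mono[rotated]) simp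
  also have "\<dots> \<le> card (PiE H (\<lambda>_. UNIV :: bit set))" by (rule card_image_le) (simp add: finite_PiE assms)
  also have "\<dots> = 2 ^ card H" by (simp add: card_PiE assms card_UNIV_bit)
  finally show ?thesis .
qed

definition const_coeff_on :: "'c set \<Rightarrow> ('c \<Rightarrow> bit fps) \<Rightarrow> ('c \<Rightarrow> bit)" where
  "const_coeff_on X w = (\<lambda>x. if x \<in> X then w x $ 0 else 0)"

lemma const_coeff_on_sum:
  "const_coeff_on X (\<lambda>x. \<Sum>g\<in>F. c g * g x) = (\<lambda>x. \<Sum>g\<in>F. (c g $ 0) * const_coeff_on X g x)"
  unfolding const_coeff_on_def by (auto intro!: ext simp: fps_sum_nth sum_distrib_left)

lemma const_coeff_on_add:
  "const_coeff_on X (\<lambda>x. u x + w x) = (\<lambda>x. const_coeff_on X u x + const_coeff_on X w x)"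
  unfolding const_coeff_on_def by auto

lemma rspan_const_coeff_on:
  assumes "u \<in> rspan G"
  shows "const_coeff_on X u \<in> rspan (const_coeff_on X ` G)"
proof -
  from assms obtain F c where F: "finite F" "F \<subseteq> G" and u: "u = (\<lambda>x. \<Sum>g\<in>F. c g * g x)"
    unfolding rspan_def by blast
  let ?d = "\<lambda>h. \<Sum>g\<in>{g\<in>F. const_coeff_on X g = h}. c g $ 0"
  have "const_coeff_on X u = (\<lambda>x. \<Sum>g\<in>F. (c g $ 0) * const_coeff_on X g x)"
    unfolding u const_coeff_on_sum ..
  also have "\<dots> = (\<lambda>x. \<Sum>h\<in>const_coeff_on X ` F. ?d h * h x)"
  proof
    fix x
    have "(\<Sum>g\<in>F. (c g $ 0) * const_coeff_on X g x) =
        (\<Sum>h\<in>const_coeff_on X ` F. \<Sum>g\<in>{g\<in>F. const_coeff_on X g = h}. (c g $ 0) * const_coeff_on X g x)"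
      using F(1) by (rule sum.image_gen)
    also have "\<dots> = (\<Sum>h\<in>const_coeff_on X ` F. ?d h * h x)"
    proof (rule sum.cong[OF refl])
      fix h assume "h \<in> const_coeff_on X ` F"
      have "(\<Sum>g\<in>{g\<in>F. const_coeff_on X g = h}. (c g $ 0) * const_coeff_on X g x) =
          (\<Sum>g\<in>{g\<in>F. const_coeff_on X g = h}. (c g $ 0) * h x)"
        by (rule sum.cong) auto
      then show "(\<Sum>g\<in>{g\<in>F. const_coeff_on X g = h}. (c g $ 0) * const_coeff_on X g x) = ?d h * h x"
        by (simp only: sum_distrib_right)
    qed
    finally show "(\<Sum>g\<in>F. (c g $ 0) * const_coeff_on X g x) = (\<Sum>h\<in>const_coeff_on X ` F. ?d h * h x)" .
  qed
  finally show ?thesis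
    using F unfolding rspan_def by (intro CollectI exI[of _ "const_coeff_on X ` F"] exI[of _ ?d]) auto
qed

text \<open>Modulo \<open>q\<close>, generators of \<open>M/N\<close> span all \<open>\<int>/2\<close>-cochains supported on \<open>X\<close>, and there
  are \<open>2^|X|\<close> of those.\<close>

lemma card_le_card_generators:
  fixes X :: "'c::finite set"
  assumes G: "generates M N G" and N: "\<And>n. n \<in> N \<Longrightarrow> const_coeff_on X n = (\<lambda>_. 0)"
    and M: "{f. \<forall>x. x \<notin> X \<longrightarrow> f x = 0} \<subseteq> const_coeff_on X ` M"
  shows "card X \<le> card G"
proof -
  have span: "const_coeff_on X ` M \<subseteq> rspan (const_coeff_on X ` G)"
  proof
    fix f assume "f \<in> const_coeff_on X ` M"
    then obtain m where m: "m \<in> M" "f = const_coeff_on X m" by blast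
    then obtain u w where uw: "u \<in> rspan G" "w \<in> N" "m = (\<lambda>x. u x + w x)"
      using G unfolding generates_def by blast
    have "f = const_coeff_on X u"
      using m(2) uw(3) N[OF uw(2)] by (simp only: const_coeff_on_add add_0_right)
    then show "f \<in> rspan (const_coeff_on X ` G)" using rspan_const_coeff_on[OF uw(1)] by simp
  qed
  have fG: "finite G" using G unfolding generates_def by simp
  have "2 ^ card X = card {f :: 'c \<Rightarrow> bit. \<forall>x. x \<notin> X \<longrightarrow> f x = 0}"
    by (simp add: card_bit_functions_supported_on)
  also have "\<dots> \<le> card (rspan (const_coeff_on X ` G))" using M span by (intro card_mono) auto
  also have "\<dots> \<le> 2 ^ card (const_coeff_on X ` G)" using fG by (intro card_rspan_bit_le) simp
  also have "\<dots> \<le> 2 ^ card G" using fG by (intro power_increasing card_image_le) auto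
  finally have "(2::nat) ^ card X \<le> 2 ^ card G" .
  then show ?thesis by simp
qed

section \<open>Differentials in normal form\<close>

definition normal_form :: "('c \<Rightarrow> 'c \<Rightarrow> 'r::zero) \<Rightarrow> bool" where
  "normal_form N \<longleftrightarrow> (\<forall>x y y'. N x y \<noteq> 0 \<longrightarrow> N x y' \<noteq> 0 \<longrightarrow> y = y') \<and>
                     (\<forall>x x' y. N x y \<noteq> 0 \<longrightarrow> N x' y \<noteq> 0 \<longrightarrow> x = x') \<and>
                     (\<forall>x y z. N x y \<noteq> 0 \<longrightarrow> N y z = 0)"

definition sources :: "('c \<Rightarrow> 'c \<Rightarrow> 'r::zero) \<Rightarrow> 'c set" where
  "sources N = {x. \<exists>y. N x y \<noteq> 0}"

definition targets :: "('c \<Rightarrow> 'c \<Rightarrow> 'r::zero) \<Rightarrow> 'c set" where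
  "targets N = {y. \<exists>x. N x y \<noteq> 0}"

definition unpaired :: "('c \<Rightarrow> 'c \<Rightarrow> 'r::zero) \<Rightarrow> 'c set" where
  "unpaired N = - (sources N \<union> targets N)"

definition partner :: "('c \<Rightarrow> 'c \<Rightarrow> 'r::zero) \<Rightarrow> 'c \<Rightarrow> 'c" where
  "partner N x = (SOME y. N x y \<noteq> 0)"

definition basis_vec :: "'c \<Rightarrow> 'c \<Rightarrow> 'r::comm_ring_1" where
  "basis_vec x = (\<lambda>z. of_bool (z = x))"

lemma inj_basis_vec: "inj (basis_vec :: 'c \<Rightarrow> 'c \<Rightarrow> 'r::comm_ring_1)"
  by (rule injI) (metis basis_vec_def of_bool_eq_iff)

lemma card_basis_vec_image: "card (basis_vec ` X :: ('c \<Rightarrow> 'r::comm_ring_1) set) = card X"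
  by (rule card_image) (rule inj_on_subset[OF inj_basis_vec], simp)

lemma rspan_basis_vec_restrict:
  fixes w :: "'c::finite \<Rightarrow> 'r::comm_ring_1"
  shows "(\<lambda>y. if y \<in> X then w y else 0) \<in> rspan (basis_vec ` X)"
proof -
  have inj: "inj_on (basis_vec :: 'c \<Rightarrow> 'c \<Rightarrow> 'r) X"
    by (rule inj_on_subset[OF inj_basis_vec]) simp
  have coeff: "(\<Sum>z\<in>UNIV. basis_vec x z * w z) = w x" for x
    unfolding basis_vec_def using sum_mat_one_left'[of x w] by (simp add: mat_one_def)
  have "(\<lambda>y. \<Sum>g\<in>basis_vec ` X. (\<lambda>g. \<Sum>z\<in>UNIV. g z * w z) g * g y) = (\<lambda>y. \<Sum>x\<in>X. w x * basis_vec x y)"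
    using inj by (simp add: sum.reindex coeff)
  also have "\<dots> = (\<lambda>y. if y \<in> X then w y else 0)"
    unfolding basis_vec_def by (auto intro!: ext simp: of_bool_def if_distrib[where f="\<lambda>a. _ * a"] cong: if_cong)
  finally show ?thesis
    unfolding rspan_def by (intro CollectI exI[of _ "basis_vec ` X"] exI[of _ "\<lambda>g. \<Sum>z\<in>UNIV. g z * w z"]) simp
qed

lemma generates_basis_vecs:
  fixes M N :: "('c::finite \<Rightarrow> 'r::comm_ring_1) set"
  assumes "basis_vec ` X \<subseteq> M" and "\<And>w. w \<in> M \<Longrightarrow> (\<lambda>x. if x \<in> X then 0 else w x) \<in> N"
  shows "generates M N (basis_vec ` X)"
  unfolding generates_def
proof (intro conjI subsetI)
  fix w assume "w \<in> M"
  then show "w \<in> {(\<lambda>x. u x + w x) | u w. u \<in> rspan (basis_vec ` X) \<and> w \<in> N}"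
    by (intro CollectI exI[of _ "\<lambda>x. if x \<in> X then w x else 0"] exI[of _ "\<lambda>x. if x \<in> X then 0 else w x"])
      (auto intro: rspan_basis_vec_restrict assms(2))
qed (use assms(1) in auto)

context
  fixes N :: "'c \<Rightarrow> 'c \<Rightarrow> 'r::zero"
  assumes nf: "normal_form N"
begin

lemma normal_form_row: "N x y \<noteq> 0 \<Longrightarrow> N x y' \<noteq> 0 \<Longrightarrow> y = y'"
  using nf unfolding normal_form_def by blast

lemma normal_form_col: "N x y \<noteq> 0 \<Longrightarrow> N x' y \<noteq> 0 \<Longrightarrow> x = x'"
  using nf unfolding normal_form_def by blast

lemma normal_form_target_row: "N x y \<noteq> 0 \<Longrightarrow> N y z = 0"
  using nf unfolding normal_form_def by blast

lemma normal_form_source_col: "N x y \<noteq> 0 \<Longrightarrow> N z x = 0"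
  using nf unfolding normal_form_def by blast

lemma sources_targets_disjoint: "sources N \<inter> targets N = {}"
  unfolding sources_def targets_def using normal_form_source_col by blast

lemma partner_eq:
  assumes "N x y \<noteq> 0" shows "partner N x = y"
proof -
  have "N x (partner N x) \<noteq> 0" unfolding partner_def using assms by (rule someI)
  then show ?thesis using normal_form_row[OF assms] by blast
qed

end

lemma mat_apply_not_target: "y \<notin> targets N \<Longrightarrow> mat_apply N w y = 0"
  unfolding mat_apply_def targets_def by simp

context
  fixes N :: "'c::finite \<Rightarrow> 'c \<Rightarrow> 'r::comm_ring_1"
  assumes nf: "normal_form N"
begin

lemma mat_apply_normal_form_target: "N x y \<noteq> 0 \<Longrightarrow> mat_apply N w y = N x y * w x"
  unfolding mat_apply_def
proof (rule sum_UNIV_single)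
  fix x' assume "N x y \<noteq> 0" "x' \<noteq> x"
  then have "N x' y = 0" using normal_form_col[OF nf] by blast
  then show "N x' y * w x' = 0" by simp
qed

lemma coboundary_normal_form:
  assumes r: "\<And>y. r y \<noteq> 0 \<Longrightarrow> \<exists>x b. N x y \<noteq> 0 \<and> N x y * b = 1"
  shows "r \<in> coboundaries N"
proof -
  define v where
    "v x = (if x \<in> sources N then (SOME b. N x (partner N x) * b = 1) * r (partner N x) else 0)" for x
  have "mat_apply N v = r"
  proof (rule ext)
    fix y show "mat_apply N v y = r y"
    proof (cases "y \<in> targets N")
      case True
      then obtain x where x: "N x y \<noteq> 0" unfolding targets_def by blast
      then have "x \<in> sources N" unfolding sources_def by blast
      then have "mat_apply N v y = N x y * ((SOME b. N x y * b = 1) * r y)"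
        using mat_apply_normal_form_target[OF x] partner_eq[OF nf x] unfolding v_def by simp
      also have "\<dots> = r y"
      proof (cases "r y = 0")
        case False
        then obtain x' b where "N x' y \<noteq> 0" "N x' y * b = 1" using r by blast
        then have "N x y * b = 1" using normal_form_col[OF nf x] by blast
        then have "N x y * (SOME b. N x y * b = 1) = 1" by (rule someI)
        then show ?thesis by (simp add: mult.assoc[symmetric])
      qed simp
      finally show ?thesis .
    next
      case False
      then show ?thesis using r mat_apply_not_target[OF False] unfolding targets_def by force
    qed
  qed
  then show ?thesis unfolding coboundaries_def by (metis rangeI)
qed

end

context
  fixes N :: "'c::finite \<Rightarrow> 'c \<Rightarrow> 'r::idom"
  assumes nf: "normal_form N"
begin

lemma cocycles_normal_form: "cocycles N = {w. \<forall>x\<in>sources N. w x = (0::'r)}"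
proof (intro set_eqI iffI)
  fix w :: "'c \<Rightarrow> 'r" assume w: "w \<in> cocycles N"
  show "w \<in> {w. \<forall>x\<in>sources N. w x = 0}"
  proof (intro CollectI ballI)
    fix x assume "x \<in> sources N"
    then obtain y where y: "N x y \<noteq> 0" unfolding sources_def by blast
    have "mat_apply N w y = 0" using w unfolding cocycles_def by simp
    then show "w x = 0" using mat_apply_normal_form_target[OF nf y] y by simp
  qed
next
  fix w :: "'c \<Rightarrow> 'r" assume w: "w \<in> {w. \<forall>x\<in>sources N. w x = 0}"
  have "mat_apply N w y = 0" for y
  proof (cases "y \<in> targets N")
    case True
    then obtain x where x: "N x y \<noteq> 0" unfolding targets_def by blast
    then have "x \<in> sources N" unfolding sources_def by blast
    then show ?thesis using mat_apply_normal_form_target[OF nf x] w by simp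
  qed (rule mat_apply_not_target)
  then show "w \<in> cocycles N" unfolding cocycles_def by auto
qed

text \<open>Multiplying by the product \<open>a\<close> of all nonzero entries clears every denominator at once.\<close>

lemma torsion_cocycles_normal_form: "torsion_cocycles N = {w. \<forall>x. x \<notin> targets N \<longrightarrow> w x = (0::'r)}"
proof (intro set_eqI iffI)
  fix w :: "'c \<Rightarrow> 'r" assume "w \<in> torsion_cocycles N"
  then obtain a u where a: "a \<noteq> 0" "mat_apply N u = (\<lambda>x. a * w x)"
    unfolding torsion_cocycles_def coboundaries_def by auto
  show "w \<in> {w. \<forall>x. x \<notin> targets N \<longrightarrow> w x = 0}"
  proof (intro CollectI allI impI)
    fix x assume "x \<notin> targets N"
    then have "a * w x = 0" using mat_apply_not_target[of x N u] a(2) by metis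
    then show "w x = 0" using a(1) by simp
  qed
next
  fix w :: "'c \<Rightarrow> 'r" assume w: "w \<in> {w. \<forall>x. x \<notin> targets N \<longrightarrow> w x = 0}"
  then have "w \<in> cocycles N"
    unfolding cocycles_normal_form using sources_targets_disjoint[OF nf] by auto
  define E where "E = {p. N (fst p) (snd p) \<noteq> 0}"
  define a where "a = (\<Prod>p\<in>E. N (fst p) (snd p))"
  have "a \<noteq> 0" unfolding a_def E_def by simp
  define v where
    "v x = (if x \<in> sources N then (\<Prod>p\<in>E - {(x, partner N x)}. N (fst p) (snd p)) * w (partner N x) else 0)"
    for x
  have "mat_apply N v y = a * w y" for y
  proof (cases "y \<in> targets N")
    case True
    then obtain x where x: "N x y \<noteq> 0" unfolding targets_def by blast
    then have "x \<in> sources N" and xy: "(x, y) \<in> E" unfolding sources_def E_def by auto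
    then have "mat_apply N v y = N x y * ((\<Prod>p\<in>E - {(x, y)}. N (fst p) (snd p)) * w y)"
      using mat_apply_normal_form_target[OF nf x] partner_eq[OF nf x] unfolding v_def by simp
    also have "\<dots> = a * w y"
      unfolding a_def using prod.remove[OF _ xy, of "\<lambda>p. N (fst p) (snd p)"] by (simp add: mult.assoc)
    finally show ?thesis .
  next
    case False
    then show ?thesis using mat_apply_not_target[OF False] w by simp
  qed
  then have "mat_apply N v = (\<lambda>x. a * w x)" ..
  then have "(\<lambda>x. a * w x) \<in> coboundaries N" unfolding coboundaries_def by (metis rangeI)
  then show "w \<in> torsion_cocycles N"
    using \<open>w \<in> cocycles N\<close> \<open>a \<noteq> 0\<close> unfolding torsion_cocycles_def by blast
qed

end

definition torsion_targets :: "('c \<Rightarrow> 'c \<Rightarrow> bit fps) \<Rightarrow> 'c set" where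
  "torsion_targets N = {y. \<exists>x. N x y \<noteq> 0 \<and> N x y $ 0 = 0}"

context
  fixes N :: "'c::finite \<Rightarrow> 'c \<Rightarrow> bit fps"
  assumes nf: "normal_form N"
begin

lemma min_gens_free_part_normal_form:
  "min_gens (cocycles N) (torsion_cocycles N) = card (unpaired N)"
proof (rule min_gens_eqI)
  show "generates (cocycles N) (torsion_cocycles N) (basis_vec ` unpaired N)"
    by (rule generates_basis_vecs)
      (auto simp: cocycles_normal_form[OF nf] torsion_cocycles_normal_form[OF nf] unpaired_def basis_vec_def)
  show "card (basis_vec ` unpaired N :: ('c \<Rightarrow> bit fps) set) = card (unpaired N)"
    by (rule card_basis_vec_image)
next
  fix G assume G: "generates (cocycles N) (torsion_cocycles N) G"
  show "card (unpaired N) \<le> card G"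
  proof (rule card_le_card_generators[OF G])
    fix n assume "n \<in> torsion_cocycles N"
    then show "const_coeff_on (unpaired N) n = (\<lambda>_. 0)"
      unfolding torsion_cocycles_normal_form[OF nf] const_coeff_on_def unpaired_def by auto
  next
    show "{f. \<forall>x. x \<notin> unpaired N \<longrightarrow> f x = 0} \<subseteq> const_coeff_on (unpaired N) ` cocycles N"
    proof
      fix f :: "'c \<Rightarrow> bit" assume f: "f \<in> {f. \<forall>x. x \<notin> unpaired N \<longrightarrow> f x = 0}"
      have "(\<lambda>x. fps_const (f x)) \<in> cocycles N"
        using f unfolding cocycles_normal_form[OF nf] unpaired_def by auto
      moreover have "f = const_coeff_on (unpaired N) (\<lambda>x. fps_const (f x))"
        using f unfolding const_coeff_on_def by auto
      ultimately show "f \<in> const_coeff_on (unpaired N) ` cocycles N" by blast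
    qed
  qed
qed

lemma min_gens_torsion_part_normal_form:
  "min_gens (torsion_cocycles N) (coboundaries N) = card (torsion_targets N)"
proof (rule min_gens_eqI)
  show "generates (torsion_cocycles N) (coboundaries N) (basis_vec ` torsion_targets N)"
  proof (rule generates_basis_vecs)
    show "basis_vec ` torsion_targets N \<subseteq> torsion_cocycles N"
      unfolding torsion_cocycles_normal_form[OF nf] torsion_targets_def targets_def basis_vec_def by auto
  next
    fix w assume w: "w \<in> torsion_cocycles N"
    show "(\<lambda>x. if x \<in> torsion_targets N then 0 else w x) \<in> coboundaries N"
    proof (rule coboundary_normal_form[OF nf])
      fix y assume "(if y \<in> torsion_targets N then 0 else w y) \<noteq> 0"
      then have "y \<in> targets N" "y \<notin> torsion_targets N"
        using w unfolding torsion_cocycles_normal_form[OF nf] by (auto split: if_splits)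
      then obtain x where "N x y \<noteq> 0" "N x y $ 0 \<noteq> 0"
        unfolding targets_def torsion_targets_def by blast
      then show "\<exists>x b. N x y \<noteq> 0 \<and> N x y * b = 1" using inverse_mult_eq_1' by blast
    qed
  qed
  show "card (basis_vec ` torsion_targets N :: ('c \<Rightarrow> bit fps) set) = card (torsion_targets N)"
    by (rule card_basis_vec_image)
next
  fix G assume G: "generates (torsion_cocycles N) (coboundaries N) G"
  show "card (torsion_targets N) \<le> card G"
  proof (rule card_le_card_generators[OF G])
    fix n assume "n \<in> coboundaries N"
    then obtain v where n: "n = mat_apply N v" unfolding coboundaries_def by blast
    show "const_coeff_on (torsion_targets N) n = (\<lambda>_. 0)"
    proof
      fix y show "const_coeff_on (torsion_targets N) n y = 0"
      proof (cases "y \<in> torsion_targets N")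
        case True
        then obtain x where x: "N x y \<noteq> 0" "N x y $ 0 = 0" unfolding torsion_targets_def by blast
        show ?thesis
          using True x mat_apply_normal_form_target[OF nf x(1)] unfolding const_coeff_on_def n by simp
      qed (simp add: const_coeff_on_def)
    qed
  next
    show "{f. \<forall>x. x \<notin> torsion_targets N \<longrightarrow> f x = 0} \<subseteq> const_coeff_on (torsion_targets N) ` torsion_cocycles N"
    proof
      fix f :: "'c \<Rightarrow> bit" assume f: "f \<in> {f. \<forall>x. x \<notin> torsion_targets N \<longrightarrow> f x = 0}"
      have "(\<lambda>x. fps_const (f x)) \<in> torsion_cocycles N"
        using f unfolding torsion_cocycles_normal_form[OF nf] torsion_targets_def targets_def by auto
      moreover have "f = const_coeff_on (torsion_targets N) (\<lambda>x. fps_const (f x))"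
        using f unfolding const_coeff_on_def by auto
      ultimately show "f \<in> const_coeff_on (torsion_targets N) ` torsion_cocycles N" by blast
    qed
  qed
qed

end

text \<open>Over the field \<open>\<int>/2\<close> the lower bound is a count: \<open>2^|Z| \<le> 2^|G| \<cdot> 2^|B|\<close>.\<close>

lemma min_gens_cohomology_normal_form_bit:
  fixes N :: "'c::finite \<Rightarrow> 'c \<Rightarrow> bit"
  assumes nf: "normal_form N"
  shows "min_gens (cocycles N) (coboundaries N) = card (unpaired N)"
proof (rule min_gens_eqI)
  show "generates (cocycles N) (coboundaries N) (basis_vec ` unpaired N)"
  proof (rule generates_basis_vecs)
    show "basis_vec ` unpaired N \<subseteq> cocycles N"
      unfolding cocycles_normal_form[OF nf] unpaired_def basis_vec_def by auto
  next
    fix w assume w: "w \<in> cocycles N"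
    show "(\<lambda>x. if x \<in> unpaired N then 0 else w x) \<in> coboundaries N"
    proof (rule coboundary_normal_form[OF nf])
      fix y assume "(if y \<in> unpaired N then 0 else w y) \<noteq> 0"
      then have "y \<in> targets N"
        using w unfolding cocycles_normal_form[OF nf] unpaired_def by (auto split: if_splits)
      then obtain x where "N x y \<noteq> 0" unfolding targets_def by blast
      then show "\<exists>x b. N x y \<noteq> 0 \<and> N x y * b = 1" by (metis right_inverse)
    qed
  qed
  show "card (basis_vec ` unpaired N :: ('c \<Rightarrow> bit) set) = card (unpaired N)"
    by (rule card_basis_vec_image)
next
  fix G assume G: "generates (cocycles N) (coboundaries N) G"
  have fG: "finite G" using G unfolding generates_def by simp
  have "cocycles N \<subseteq> (\<lambda>(u, t) x. u x + t x) ` (rspan G \<times> coboundaries N)"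
    using G unfolding generates_def by fastforce
  then have "card (cocycles N) \<le> card ((\<lambda>(u, t) x. u x + t x) ` (rspan G \<times> coboundaries N))"
    by (intro card_mono) auto
  also have "\<dots> \<le> card (rspan G \<times> coboundaries N)" by (rule card_image_le) auto
  also have "\<dots> = card (rspan G) * card (coboundaries N)" by (rule card_cartesian_product)
  also have "\<dots> \<le> 2 ^ card G * 2 ^ card (targets N)"
  proof (intro mult_mono card_rspan_bit_le fG)
    have "coboundaries N \<subseteq> {f. \<forall>x. x \<notin> targets N \<longrightarrow> f x = 0}"
      unfolding coboundaries_def using mat_apply_not_target by auto
    then have "card (coboundaries N) \<le> card {f :: 'c \<Rightarrow> bit. \<forall>x. x \<notin> targets N \<longrightarrow> f x = 0}"
      by (intro card_mono) auto
    then show "card (coboundaries N) \<le> 2 ^ card (targets N)"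
      by (simp only: card_bit_functions_supported_on)
  qed auto
  finally have "(2::nat) ^ card (- sources N) \<le> 2 ^ (card G + card (targets N))"
    using card_bit_functions_supported_on[of "- sources N"]
    by (simp add: cocycles_normal_form[OF nf] power_add Ball_def)
  then have le: "card (- sources N) \<le> card G + card (targets N)" by simp
  have "- sources N = unpaired N \<union> targets N"
    unfolding unpaired_def using sources_targets_disjoint[OF nf] by auto
  moreover have "unpaired N \<inter> targets N = {}" unfolding unpaired_def by auto
  ultimately have "card (- sources N) = card (unpaired N) + card (targets N)"
    by (simp add: card_Un_disjoint)
  then show "card (unpaired N) \<le> card G" using le by simp
qed

lemma sum_if_two:
  assumes "i \<noteq> j"
  shows "(\<Sum>y\<in>(UNIV::'c::finite set). if y = i then A y else if y = j then B y else C y) =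
     A i + B j + (\<Sum>y\<in>UNIV. C y) - C i - (C j :: 'r::comm_ring_1)"
proof -
  have "(\<Sum>y\<in>(UNIV::'c set). if y = i then A y else if y = j then B y else C y)
      = (\<Sum>y\<in>UNIV. (if y = i then A y - C y else 0) + (if y = j then B y - C y else 0) + C y)"
    using assms by (intro sum.cong) auto
  also have "\<dots> = A i + B j + (\<Sum>y\<in>UNIV. C y) - C i - C j"
    by (simp add: sum.distrib)
  finally show ?thesis .
qed

text \<open>Change of basis adapted to a pivot \<open>M i j = c\<close> whose row is \<open>c \<cdot> g\<close> and whose column is
  \<open>c \<cdot> h\<close>: the basis element \<open>j\<close> becomes \<open>g\<close>, every \<open>x \<notin> {i, j}\<close> becomes \<open>x - h x \<cdot> i\<close>,
  and \<open>elim_right\<close> is the inverse change of basis.\<close>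

definition elim_left :: "'c \<Rightarrow> 'c \<Rightarrow> ('c \<Rightarrow> 'r) \<Rightarrow> ('c \<Rightarrow> 'r) \<Rightarrow> 'c \<Rightarrow> 'c \<Rightarrow> 'r::comm_ring_1" where
  "elim_left i j g h =
     (\<lambda>x y. if x = i then mat_one i y else if x = j then g y else mat_one x y - h x * mat_one i y)"

definition elim_right :: "'c \<Rightarrow> 'c \<Rightarrow> ('c \<Rightarrow> 'r) \<Rightarrow> ('c \<Rightarrow> 'r) \<Rightarrow> 'c \<Rightarrow> 'c \<Rightarrow> 'r::comm_ring_1" where
  "elim_right i j g h =
     (\<lambda>y x. if x = i then h y else if x = j then mat_one y j else mat_one y x - mat_one y j * g x)"

context
  fixes i j :: "'c::finite" and g h :: "'c \<Rightarrow> 'r::comm_ring_1"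
  assumes ij: "i \<noteq> j" and gj: "g j = 1" and hi: "h i = 1" and gh: "(\<Sum>y\<in>UNIV. g y * h y) = 0"
begin

lemma mat_mult_elim_left_right: "mat_mult (elim_left i j g h) (elim_right i j g h) = mat_one"
proof (intro ext)
  fix x z
  show "mat_mult (elim_left i j g h) (elim_right i j g h) x z = mat_one x z"
    unfolding mat_mult_def elim_left_def using ij gj hi gh
    by (cases "x = i"; cases "x = j"; cases "z = i"; cases "z = j")
      (simp_all add: elim_right_def sum_subtractf sum.distrib right_diff_distrib left_diff_distrib
        mult.assoc sum_distrib_left[symmetric] sum_mat_one)
qed

lemma mat_mult_elim_right_left: "mat_mult (elim_right i j g h) (elim_left i j g h) = mat_one"
proof (intro ext)
  fix y z
  have gh': "(\<Sum>y\<in>UNIV. g y * (h y * c)) = 0" for c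
    using gh by (simp add: sum_distrib_right[symmetric] mult.assoc[symmetric])
  have if_mult: "(if x = i then a else if x = j then b else c) * (if x = i then a' else if x = j then b' else c') =
      (if x = i then a * a' else if x = j then b * b' else c * (c' :: 'r))" for x a b c a' b' c'
    by auto
  show "mat_mult (elim_right i j g h) (elim_left i j g h) y z = mat_one y z"
    unfolding mat_mult_def elim_left_def elim_right_def if_mult sum_if_two[OF ij] using ij gj hi gh gh'
    by (cases "y = i"; cases "y = j"; cases "z = i"; cases "z = j")
      (simp_all add: sum_subtractf sum.distrib right_diff_distrib left_diff_distrib
        mult.assoc sum_distrib_left[symmetric] sum_mat_one)
qed

end

lemma elim_conjugate_pivot:
  fixes M :: "'c::finite \<Rightarrow> 'c \<Rightarrow> 'r::comm_ring_1"
  assumes ij: "i \<noteq> j" and gj: "g j = 1" and hi: "h i = 1" and gh: "(\<Sum>y\<in>UNIV. g y * h y) = 0"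
    and row: "\<And>y. M i y = c * g y" and col: "\<And>x. M x j = c * h x"
    and gM: "\<And>z. (\<Sum>y\<in>UNIV. g y * M y z) = 0" and Mh: "\<And>x. (\<Sum>y\<in>UNIV. M x y * h y) = 0"
  defines "N \<equiv> mat_mult (mat_mult (elim_left i j g h) M) (elim_right i j g h)"
  shows "N i w = c * mat_one j w" and "N j w = 0" and "N x i = 0" and "x \<noteq> i \<Longrightarrow> N x j = 0"
proof -
  let ?P = "elim_left i j g h" and ?Q = "elim_right i j g h"
  have PM_i: "mat_mult ?P M i z = c * g z" for z
    unfolding mat_mult_def elim_left_def by (simp add: sum_mat_one row)
  have PM_j: "mat_mult ?P M j z = 0" for z
    unfolding mat_mult_def elim_left_def using ij gM by simp
  have PM_other: "x \<noteq> i \<Longrightarrow> x \<noteq> j \<Longrightarrow> mat_mult ?P M x z = M x z - h x * (c * g z)" for x z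
    unfolding mat_mult_def elim_left_def
    by (simp add: sum_subtractf left_diff_distrib mult.assoc sum_distrib_left[symmetric] sum_mat_one row)
  have N_i: "N i w' = c * mat_one j w'" for w'
  proof -
    have "N i w' = (\<Sum>z\<in>UNIV. c * g z * ?Q z w')"
      unfolding N_def mat_mult_def[of "mat_mult _ _"] PM_i ..
    also have "\<dots> = c * mat_mult ?P ?Q j w'"
      unfolding mat_mult_def elim_left_def using ij by (simp add: sum_distrib_left mult.assoc)
    finally show ?thesis using mat_mult_elim_left_right[OF ij gj hi gh] by simp
  qed
  have N_j: "N j w' = 0" for w'
    unfolding N_def mat_mult_def[of "mat_mult _ _"] PM_j by simp
  show "N i w = c * mat_one j w" "N j w = 0" using N_i N_j .
  show "N x i = 0"
  proof (cases "x = i \<or> x = j")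
    case True
    then show ?thesis using N_i N_j ij by auto
  next
    case False
    then have "N x i = (\<Sum>z\<in>UNIV. (M x z - h x * (c * g z)) * h z)"
      unfolding N_def mat_mult_def[of "mat_mult _ _"] using PM_other ij by (simp add: elim_right_def)
    also have "\<dots> = 0"
      using Mh gh by (simp add: left_diff_distrib sum_subtractf mult.assoc sum_distrib_left[symmetric])
    finally show ?thesis .
  qed
  show "N x j = 0" if "x \<noteq> i"
  proof (cases "x = j")
    case True
    then show ?thesis using N_j by simp
  next
    case False
    then have "N x j = (\<Sum>z\<in>UNIV. (M x z - h x * (c * g z)) * mat_one z j)"
      unfolding N_def mat_mult_def[of "mat_mult _ _"] using PM_other that ij by (simp add: elim_right_def)
    also have "\<dots> = 0" using col gj by (simp add: sum_mat_one)
    finally show ?thesis .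
  qed
qed

section \<open>Pivots of a square-zero matrix over \<open>\<int>/2[[q]]\<close>\<close>

definition mat_reduce :: "('c \<Rightarrow> 'c \<Rightarrow> 'a::comm_ring_1 fps) \<Rightarrow> 'c \<Rightarrow> 'c \<Rightarrow> 'a" where
  "mat_reduce X = (\<lambda>x y. X x y $ 0)"

lemma mat_reduce_mat_mult: "mat_reduce (mat_mult X Y) = mat_mult (mat_reduce X) (mat_reduce Y)"
  unfolding mat_reduce_def mat_mult_def by (auto intro!: ext simp: fps_sum_nth)

lemma mat_reduce_one: "mat_reduce mat_one = mat_one"
  unfolding mat_reduce_def mat_one_def by (auto intro!: ext)

lemma fps_matrix_factor_min_subdegree:
  fixes M :: "'c::finite \<Rightarrow> 'c \<Rightarrow> 'a::comm_ring_1 fps"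
  assumes nz: "M x0 y0 \<noteq> 0"
  shows "\<exists>k H a b. (\<forall>x y. M x y = H x y * fps_X ^ k) \<and> H a b $ 0 \<noteq> 0"
proof -
  define S where "S = {p. M (fst p) (snd p) \<noteq> 0}"
  define k where "k = Min ((\<lambda>p. subdegree (M (fst p) (snd p))) ` S)"
  have "S \<noteq> {}" using nz unfolding S_def by auto
  then have "k \<in> (\<lambda>p. subdegree (M (fst p) (snd p))) ` S" unfolding k_def by (intro Min_in) auto
  then obtain p where pk: "k = subdegree (M (fst p) (snd p))" and pS: "p \<in> S" by (rule imageE)
  have k_le: "k \<le> subdegree (M x y)" if "M x y \<noteq> 0" for x y
  proof -
    have "subdegree (M x y) \<in> (\<lambda>p. subdegree (M (fst p) (snd p))) ` S"
      using that unfolding S_def by (intro image_eqI[of _ _ "(x, y)"]) simp_all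
    then show ?thesis unfolding k_def by (intro Min_le) auto
  qed
  define H where "H x y = fps_shift k (M x y)" for x y
  have "M x y = H x y * fps_X ^ k" for x y
  proof (cases "M x y = 0")
    case True
    then show ?thesis unfolding H_def by simp
  next
    case False
    show ?thesis unfolding H_def by (rule fps_shift_times_fps_X_power[OF k_le[OF False], symmetric])
  qed
  moreover have "H (fst p) (snd p) $ 0 \<noteq> 0"
  proof -
    have "M (fst p) (snd p) \<noteq> 0" using pS unfolding S_def by simp
    then have "M (fst p) (snd p) $ k \<noteq> 0" unfolding pk by (rule nth_subdegree_nonzero)
    then show ?thesis by (simp only: H_def fps_shift_nth add_0 not_False_eq_True)
  qed
  ultimately show ?thesis by (intro exI[of _ k] exI[of _ H] exI[of _ "fst p"] exI[of _ "snd p"]) simp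
qed

lemma square_zero_offdiagonal_entry:
  fixes H :: "'c::finite \<Rightarrow> 'c \<Rightarrow> 'r::idom"
  assumes HH: "mat_mult H H = (\<lambda>_ _. 0)" and nz: "H a b \<noteq> 0"
  shows "\<exists>i j. i \<noteq> j \<and> H i j \<noteq> 0"
proof (cases "a = b")
  case False
  then show ?thesis using nz by (intro exI[of _ a] exI[of _ b]) simp
next
  case True
  show ?thesis
  proof (rule ccontr)
    assume none: "\<not> ?thesis"
    have off_diagonal: "H b y = 0" if "y \<noteq> b" for y
    proof (rule ccontr)
      assume "H b y \<noteq> 0"
      then have "\<exists>i j. i \<noteq> j \<and> H i j \<noteq> 0" using that by (intro exI[of _ b] exI[of _ y]) auto
      with none show False by contradiction
    qed
    have "mat_mult H H b b = H b b * H b b"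
      unfolding mat_mult_def by (rule sum_UNIV_single) (simp add: off_diagonal)
    then have "H b b * H b b = 0" using HH by simp
    then show False using nz True by simp
  qed
qed

text \<open>An entry of minimal \<open>q\<close>-adic valuation divides every entry. After dividing by that
  power of \<open>q\<close>, the matrix stays square-zero modulo \<open>q\<close>, so some off-diagonal entry of minimal
  valuation exists as well.\<close>

lemma square_zero_pivot:
  fixes M :: "'c::finite \<Rightarrow> 'c \<Rightarrow> bit fps"
  assumes MM: "mat_mult M M = (\<lambda>_ _. 0)" and nz: "M x0 y0 \<noteq> 0"
  obtains i j c g h where "i \<noteq> j" and "c \<noteq> 0" and "\<And>y. M i y = c * g y" and "\<And>x. M x j = c * h x"
    and "g j = 1" and "h i = 1"
proof -
  obtain k H a b where hM: "\<And>x y. M x y = H x y * fps_X ^ k" and Hab: "H a b $ 0 \<noteq> 0"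
    using fps_matrix_factor_min_subdegree[of M x0 y0, OF nz] by blast
  have "mat_mult H H x z * (fps_X ^ k * fps_X ^ k) = mat_mult M M x z" for x z
    unfolding mat_mult_def hM sum_distrib_right by (rule sum.cong) (simp_all add: ac_simps)
  then have "mat_mult H H = (\<lambda>_ _. 0)" using MM by (auto intro!: ext)
  then have "mat_mult (mat_reduce H) (mat_reduce H) = (\<lambda>_ _. 0)"
    unfolding mat_reduce_mat_mult[symmetric] by (simp add: mat_reduce_def)
  then obtain i j where ij: "i \<noteq> j" and Hij: "H i j $ 0 \<noteq> 0"
    using square_zero_offdiagonal_entry[of "mat_reduce H" a b] Hab unfolding mat_reduce_def by blast
  define u where "u = H i j"
  have u: "u * inverse u = 1" using Hij unfolding u_def by (rule inverse_mult_eq_1')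
  define c where "c = u * fps_X ^ k"
  define g where "g y = H i y * inverse u" for y
  define h where "h x = H x j * inverse u" for x
  show thesis
  proof (rule that[of i j c g h])
    show "c \<noteq> 0" using u unfolding c_def by auto
    have "c * g y = (u * inverse u) * (H i y * fps_X ^ k)" for y
      unfolding c_def g_def by (simp add: ac_simps)
    then show "M i y = c * g y" for y using u hM by simp
    have "c * h x = (u * inverse u) * (H x j * fps_X ^ k)" for x
      unfolding c_def h_def by (simp add: ac_simps)
    then show "M x j = c * h x" for x using u hM by simp
    show "g j = 1" "h i = 1" using u unfolding g_def h_def u_def by simp_all
  qed (rule ij)
qed

section \<open>Existence of normal forms\<close>

definition supported_on :: "'c set \<Rightarrow> ('c \<Rightarrow> 'c \<Rightarrow> 'r::zero) \<Rightarrow> bool" where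
  "supported_on U M \<longleftrightarrow> (\<forall>x y. M x y \<noteq> 0 \<longrightarrow> x \<in> U \<and> y \<in> U)"

definition identity_off :: "'c set \<Rightarrow> ('c \<Rightarrow> 'c \<Rightarrow> 'r::comm_ring_1) \<Rightarrow> bool" where
  "identity_off U P \<longleftrightarrow> (\<forall>x y. (x \<notin> U \<or> y \<notin> U) \<longrightarrow> P x y = mat_one x y)"

definition single_entry :: "'c \<Rightarrow> 'c \<Rightarrow> 'r \<Rightarrow> 'c \<Rightarrow> 'c \<Rightarrow> 'r::zero" where
  "single_entry i j c = (\<lambda>x y. if x = i \<and> y = j then c else 0)"

lemma mat_mult_identity_off_left:
  assumes "identity_off U P" and "x \<notin> U"
  shows "mat_mult P X x z = X x (z::'c::finite)"
proof -
  have "mat_mult P X x z = (\<Sum>y\<in>UNIV. mat_one x y * X y z)"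
    unfolding mat_mult_def using assms unfolding identity_off_def by simp
  then show ?thesis by (simp add: sum_mat_one)
qed

lemma mat_mult_identity_off_right:
  assumes "identity_off U P" and "z \<notin> U"
  shows "mat_mult X P x z = X x (z::'c::finite)"
proof -
  have "mat_mult X P x z = (\<Sum>y\<in>UNIV. X x y * mat_one y z)"
    unfolding mat_mult_def using assms unfolding identity_off_def by simp
  then show ?thesis by (simp add: sum_mat_one)
qed

lemma identity_off_mono: "U' \<subseteq> U \<Longrightarrow> identity_off U' P \<Longrightarrow> identity_off U P"
  unfolding identity_off_def by blast

lemma identity_off_mat_mult:
  fixes A B :: "'c::finite \<Rightarrow> 'c \<Rightarrow> 'r::comm_ring_1"
  assumes A: "identity_off U A" and B: "identity_off U B"
  shows "identity_off U (mat_mult A B)"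
  unfolding identity_off_def
proof (intro allI impI)
  fix x y assume "x \<notin> U \<or> y \<notin> U"
  then show "mat_mult A B x y = mat_one x y"
  proof
    assume "x \<notin> U"
    then show ?thesis using mat_mult_identity_off_left[OF A] B unfolding identity_off_def by simp
  next
    assume "y \<notin> U"
    then show ?thesis using mat_mult_identity_off_right[OF B] A unfolding identity_off_def by simp
  qed
qed

lemma supported_on_conjugate:
  fixes P Q M :: "'c::finite \<Rightarrow> 'c \<Rightarrow> 'r::comm_ring_1"
  assumes P: "identity_off U P" and Q: "identity_off U Q" and M: "supported_on U M"
  shows "supported_on U (mat_mult (mat_mult P M) Q)"
  unfolding supported_on_def
proof (intro allI impI)
  fix x y assume nz: "mat_mult (mat_mult P M) Q x y \<noteq> 0"
  show "x \<in> U \<and> y \<in> U"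
  proof (rule ccontr)
    assume "\<not> (x \<in> U \<and> y \<in> U)"
    then have "x \<notin> U \<or> y \<notin> U" by blast
    then have "mat_mult (mat_mult P M) Q x y = 0"
    proof
      assume x: "x \<notin> U"
      have "mat_mult P M x z = 0" for z
        using mat_mult_identity_off_left[OF P x] M x unfolding supported_on_def by auto
      then show ?thesis unfolding mat_mult_def[of "mat_mult P M"] by simp
    next
      assume y: "y \<notin> U"
      have "M w y = 0" for w using M y unfolding supported_on_def by blast
      then have "mat_mult P M x y = 0" unfolding mat_mult_def by simp
      then show ?thesis using mat_mult_identity_off_right[OF Q y] by simp
    qed
    with nz show False by contradiction
  qed
qed

lemma mat_mult_single_entry_identity_off:
  fixes P :: "'c::finite \<Rightarrow> 'c \<Rightarrow> 'r::comm_ring_1"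
  assumes P: "identity_off V P" and "i \<notin> V" and "j \<notin> V"
  shows "mat_mult P (single_entry i j c) = single_entry i j c"
    and "mat_mult (single_entry i j c) P = single_entry i j c"
proof -
  show "mat_mult P (single_entry i j c) = single_entry i j c"
  proof (intro ext)
    fix x z
    have "mat_mult P (single_entry i j c) x z = P x i * single_entry i j c i z"
      unfolding mat_mult_def by (rule sum_UNIV_single) (simp add: single_entry_def)
    also have "\<dots> = single_entry i j c x z"
      using P assms(2) unfolding identity_off_def single_entry_def by (auto simp: mat_one_def)
    finally show "mat_mult P (single_entry i j c) x z = single_entry i j c x z" .
  qed
  show "mat_mult (single_entry i j c) P = single_entry i j c"
  proof (intro ext)
    fix x z
    have "mat_mult (single_entry i j c) P x z = single_entry i j c x j * P j z"
      unfolding mat_mult_def by (rule sum_UNIV_single) (simp add: single_entry_def)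
    also have "\<dots> = single_entry i j c x z"
      using P assms(3) unfolding identity_off_def single_entry_def by (auto simp: mat_one_def)
    finally show "mat_mult (single_entry i j c) P x z = single_entry i j c x z" .
  qed
qed

lemma normal_form_add_single_entry:
  fixes N :: "'c \<Rightarrow> 'c \<Rightarrow> 'r::monoid_add"
  assumes nf: "normal_form N" and supp: "supported_on (U - {i, j}) N" and ij: "i \<noteq> j"
  shows "normal_form (\<lambda>x y. N x y + single_entry i j c x y)"
proof -
  let ?N = "\<lambda>x y. N x y + single_entry i j c x y"
  have N_supp: "N x y \<noteq> 0 \<Longrightarrow> x \<in> U - {i, j} \<and> y \<in> U - {i, j}" for x y
    using supp unfolding supported_on_def by blast
  have row_i: "?N i y = single_entry i j c i y" for y
  proof -
    have "N i y = 0" using N_supp[of i y] by blast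
    then show ?thesis by simp
  qed
  have row_other: "x \<noteq> i \<Longrightarrow> ?N x y = N x y" for x y unfolding single_entry_def by auto
  have col_j: "?N x j = single_entry i j c x j" for x
  proof -
    have "N x j = 0" using N_supp[of x j] by blast
    then show ?thesis by simp
  qed
  have col_other: "y \<noteq> j \<Longrightarrow> ?N x y = N x y" for x y unfolding single_entry_def by auto
  show ?thesis unfolding normal_form_def
  proof (intro conjI allI impI)
    fix x y y' assume "?N x y \<noteq> 0" "?N x y' \<noteq> 0"
    then show "y = y'"
      using row_i row_other normal_form_row[OF nf] unfolding single_entry_def
      by (cases "x = i") (auto split: if_splits)
  next
    fix x x' y assume "?N x y \<noteq> 0" "?N x' y \<noteq> 0"
    then show "x = x'"
      using col_j col_other normal_form_col[OF nf] unfolding single_entry_def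
      by (cases "y = j") (auto split: if_splits)
  next
    fix x y z assume nz: "?N x y \<noteq> 0"
    show "?N y z = 0"
    proof (cases "x = i \<and> y = j")
      case True
      then show ?thesis using row_other[of j z] ij N_supp[of j z] by auto
    next
      case False
      then have "N x y \<noteq> 0" using nz unfolding single_entry_def by auto
      then have "y \<noteq> i" "N y z = 0" using N_supp[of x y] normal_form_target_row[OF nf] by auto
      then show ?thesis unfolding single_entry_def by simp
    qed
  qed
qed

lemma square_zero_split_pivot:
  fixes N :: "'c::finite \<Rightarrow> 'c \<Rightarrow> 'r::comm_ring_1"
  assumes NN: "mat_mult N N = (\<lambda>_ _. 0)" and ij: "i \<noteq> j"
    and row_i: "\<And>w. N i w = c * mat_one j w" and row_j: "\<And>w. N j w = 0"
    and col_i: "\<And>x. N x i = 0" and col_j: "\<And>x. x \<noteq> i \<Longrightarrow> N x j = 0"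
  defines "R \<equiv> \<lambda>x y. if x \<in> {i, j} \<or> y \<in> {i, j} then 0 else N x y"
  shows "N = (\<lambda>x y. R x y + single_entry i j c x y)" and "mat_mult R R = (\<lambda>_ _. 0)"
proof -
  show "N = (\<lambda>x y. R x y + single_entry i j c x y)"
  proof (intro ext)
    fix x y
    show "N x y = R x y + single_entry i j c x y"
      using ij row_i row_j col_i col_j unfolding R_def single_entry_def
      by (cases "x = i"; cases "x = j"; cases "y = i"; cases "y = j") auto
  qed
  show "mat_mult R R = (\<lambda>_ _. 0)"
  proof (intro ext)
    fix x z
    show "mat_mult R R x z = 0"
    proof (cases "x \<in> {i, j} \<or> z \<in> {i, j}")
      case True
      then show ?thesis unfolding mat_mult_def R_def by auto
    next
      case False
      have "R x y = N x y" for y using False col_i col_j unfolding R_def by auto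
      moreover have "R y z = N y z" for y using False row_i row_j ij unfolding R_def by auto
      ultimately have "mat_mult R R x z = mat_mult N N x z" unfolding mat_mult_def by simp
      then show ?thesis using NN by simp
    qed
  qed
qed

lemma square_zero_pivot_orthogonal:
  fixes M :: "'c::finite \<Rightarrow> 'c \<Rightarrow> 'r::idom"
  assumes MM: "mat_mult M M = (\<lambda>_ _. 0)" and c0: "c \<noteq> 0"
    and row: "\<And>y. M i y = c * g y" and col: "\<And>x. M x j = c * h x"
  shows "(\<Sum>y\<in>UNIV. g y * M y z) = 0" and "(\<Sum>y\<in>UNIV. M x y * h y) = 0"
    and "(\<Sum>y\<in>UNIV. g y * h y) = 0"
proof -
  have gM: "(\<Sum>y\<in>UNIV. g y * M y z') = 0" for z'
  proof -
    have "c * (\<Sum>y\<in>UNIV. g y * M y z') = mat_mult M M i z'"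
      unfolding mat_mult_def row by (simp add: sum_distrib_left mult.assoc)
    then show ?thesis using MM c0 by simp
  qed
  then show "(\<Sum>y\<in>UNIV. g y * M y z) = 0" .
  have "c * (\<Sum>y\<in>UNIV. M x y * h y) = mat_mult M M x j"
    unfolding mat_mult_def col by (simp add: sum_distrib_left ac_simps)
  then show "(\<Sum>y\<in>UNIV. M x y * h y) = 0" using MM c0 by simp
  have "c * (\<Sum>y\<in>UNIV. g y * h y) = (\<Sum>y\<in>UNIV. g y * M y j)"
    unfolding col by (simp add: sum_distrib_left ac_simps)
  then show "(\<Sum>y\<in>UNIV. g y * h y) = 0" using gM c0 by simp
qed

lemma pivot_elimination_step:
  fixes M :: "'c::finite \<Rightarrow> 'c \<Rightarrow> bit fps"
  assumes supp: "supported_on U M" and MM: "mat_mult M M = (\<lambda>_ _. 0)" and nz: "M x0 y0 \<noteq> 0"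
  obtains i j c P Q R where "i \<in> U" and "j \<in> U" and "i \<noteq> j"
    and "mat_mult P Q = mat_one" and "mat_mult Q P = mat_one"
    and "identity_off U P" and "identity_off U Q"
    and "mat_mult P M = mat_mult (\<lambda>x y. R x y + single_entry i j c x y) P"
    and "supported_on (U - {i, j}) R" and "mat_mult R R = (\<lambda>_ _. 0)"
proof -
  obtain i j c g h where ij: "i \<noteq> j" and c0: "c \<noteq> 0" and row: "\<And>y. M i y = c * g y"
    and col: "\<And>x. M x j = c * h x" and gj: "g j = 1" and hi: "h i = 1"
    by (rule square_zero_pivot[OF MM nz]) blast
  have M_supp: "M x y \<noteq> 0 \<Longrightarrow> x \<in> U \<and> y \<in> U" for x y
    using supp unfolding supported_on_def by blast
  have iU: "i \<in> U" and jU: "j \<in> U" using M_supp[of i j] row[of j] gj c0 by auto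
  have gU: "g y = 0" if "y \<notin> U" for y using M_supp[of i y] row[of y] c0 that by auto
  have hU: "h x = 0" if "x \<notin> U" for x using M_supp[of x j] col[of x] c0 that by auto
  note orthogonal = square_zero_pivot_orthogonal[OF MM c0 row col]
  define P where "P = elim_left i j g h"
  define Q where "Q = elim_right i j g h"
  define N where "N = mat_mult (mat_mult P M) Q"
  have PQ: "mat_mult P Q = mat_one" and QP: "mat_mult Q P = mat_one"
    unfolding P_def Q_def using mat_mult_elim_left_right mat_mult_elim_right_left ij gj hi orthogonal(3) by blast+
  have PU: "identity_off U P" and QU: "identity_off U Q"
    unfolding identity_off_def P_def Q_def elim_left_def elim_right_def
    using iU jU gU hU by (auto simp: mat_one_def)
  have NN: "mat_mult N N = (\<lambda>_ _. 0)"
    unfolding N_def mat_mult_assoc mat_mult_cancel_left[OF QP]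
    by (simp flip: mat_mult_assoc add: MM)
  note N_pivot = elim_conjugate_pivot[OF ij gj hi orthogonal(3) row col orthogonal(1,2), folded P_def Q_def N_def]
  define R where "R = (\<lambda>x y. if x \<in> {i, j} \<or> y \<in> {i, j} then 0 else N x y)"
  note split = square_zero_split_pivot[OF NN ij N_pivot]
  have N_split: "N = (\<lambda>x y. R x y + single_entry i j c x y)" unfolding R_def by (rule split(1))
  have RR: "mat_mult R R = (\<lambda>_ _. 0)" unfolding R_def by (rule split(2))
  show thesis
  proof (rule that[OF iU jU ij PQ QP PU QU])
    have "mat_mult P M = mat_mult N P"
      unfolding N_def mat_mult_assoc QP by simp
    then show "mat_mult P M = mat_mult (\<lambda>x y. R x y + single_entry i j c x y) P"
      by (subst (asm) N_split)
    have "supported_on U N" unfolding N_def by (rule supported_on_conjugate[OF PU QU supp])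
    then show "supported_on (U - {i, j}) R" unfolding supported_on_def R_def by auto
  qed (rule RR)
qed

lemma normal_form_exists_supported:
  fixes M :: "'c::finite \<Rightarrow> 'c \<Rightarrow> bit fps"
  assumes "supported_on U M" and "mat_mult M M = (\<lambda>_ _. 0)"
  shows "\<exists>P Q N. mat_mult P Q = mat_one \<and> mat_mult Q P = mat_one \<and> mat_mult P M = mat_mult N P \<and>
    normal_form N \<and> supported_on U N \<and> identity_off U P \<and> identity_off U Q"
  using assms
proof (induction "card U" arbitrary: U M rule: less_induct)
  case (less U M)
  show ?case
  proof (cases "\<exists>x y. M x y \<noteq> 0")
    case False
    then have "M = (\<lambda>_ _. 0)" by auto
    moreover have "normal_form (\<lambda>_ _. 0 :: bit fps)" "supported_on U (\<lambda>_ _. 0 :: bit fps)"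
      "identity_off U (mat_one :: 'c \<Rightarrow> 'c \<Rightarrow> bit fps)"
      unfolding normal_form_def supported_on_def identity_off_def by simp_all
    ultimately show ?thesis by (intro exI[of _ mat_one] exI[of _ "\<lambda>_ _. 0"]) simp
  next
    case True
    then obtain x0 y0 where "M x0 y0 \<noteq> 0" by blast
    then obtain i j c P Q R where iU: "i \<in> U" and jU: "j \<in> U" and ij: "i \<noteq> j"
      and PQ: "mat_mult P Q = mat_one" and QP: "mat_mult Q P = mat_one"
      and PU: "identity_off U P" and QU: "identity_off U Q"
      and PM: "mat_mult P M = mat_mult (\<lambda>x y. R x y + single_entry i j c x y) P"
      and R_supp: "supported_on (U - {i, j}) R" and RR: "mat_mult R R = (\<lambda>_ _. 0)"
      by (rule pivot_elimination_step[OF less.prems]) blast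
    have "card (U - {i, j}) < card U"
      using iU jU ij by (intro psubset_card_mono) auto
    then obtain P' Q' N' where P'Q': "mat_mult P' Q' = mat_one" and Q'P': "mat_mult Q' P' = mat_one"
      and P'R: "mat_mult P' R = mat_mult N' P'" and nf: "normal_form N'"
      and N'_supp: "supported_on (U - {i, j}) N'"
      and P'U: "identity_off (U - {i, j}) P'" and Q'U: "identity_off (U - {i, j}) Q'"
      using less.hyps[OF _ R_supp RR] by blast
    let ?E = "single_entry i j c"
    note E_absorbs = mat_mult_single_entry_identity_off[OF P'U, of i j c]
    have "mat_mult (mat_mult P' P) M = mat_mult (mat_mult P' (\<lambda>x y. R x y + ?E x y)) P"
      by (simp add: mat_mult_assoc PM)
    also have "mat_mult P' (\<lambda>x y. R x y + ?E x y) = mat_mult (\<lambda>x y. N' x y + ?E x y) P'"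
      by (simp add: mat_mult_add_left mat_mult_add_right P'R E_absorbs)
    finally have "mat_mult (mat_mult P' P) M = mat_mult (\<lambda>x y. N' x y + ?E x y) (mat_mult P' P)"
      by (simp add: mat_mult_assoc)
    moreover have "normal_form (\<lambda>x y. N' x y + ?E x y)"
      by (rule normal_form_add_single_entry[OF nf N'_supp ij])
    moreover have "supported_on U (\<lambda>x y. N' x y + ?E x y)"
      using N'_supp iU jU unfolding supported_on_def single_entry_def by auto
    moreover have "identity_off U (mat_mult P' P)" "identity_off U (mat_mult Q Q')"
      using identity_off_mat_mult identity_off_mono[OF _ P'U] identity_off_mono[OF _ Q'U] PU QU
      by blast+
    moreover have "mat_mult (mat_mult P' P) (mat_mult Q Q') = mat_one"
      by (simp add: mat_mult_assoc mat_mult_cancel_left[OF PQ] P'Q')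
    moreover have "mat_mult (mat_mult Q Q') (mat_mult P' P) = mat_one"
      by (simp add: mat_mult_assoc mat_mult_cancel_left[OF Q'P'] QP)
    ultimately show ?thesis by blast
  qed
qed

lemma normal_form_exists:
  fixes M :: "'c::finite \<Rightarrow> 'c \<Rightarrow> bit fps"
  assumes "mat_mult M M = (\<lambda>_ _. 0)"
  shows "\<exists>N. similar M N \<and> normal_form N"
  using normal_form_exists_supported[of UNIV M] assms
  unfolding similar_def supported_on_def by blast

lemma bit_add_self [simp]: "(a::bit) + a = 0"
  by (cases a) simp_all

lemma bit_fps_add_self [simp]: "(a::bit fps) + a = 0"
  by (rule fps_ext) (simp only: fps_add_nth bit_add_self fps_zero_nth)

lemma bit_fps_diff_eq_add: "(a::bit fps) - b = a + b"
  by (rule fps_ext) simp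

lemma fps_const_sum: "fps_const (\<Sum>x\<in>S. f x) = (\<Sum>x\<in>S. fps_const (f x))"
  by (induction S rule: infinite_finite_induct) (auto simp flip: fps_const_add)

lemma mat_one_involution:
  assumes "\<And>x. \<iota> (\<iota> x) = x"
  shows "mat_one x (\<iota> y) = mat_one (\<iota> x) y"
proof -
  have "x = \<iota> y \<longleftrightarrow> \<iota> x = y" by (metis assms)
  then show ?thesis unfolding mat_one_def by simp
qed

definition borel_matrix :: "('c::finite \<Rightarrow> 'c \<Rightarrow> bit) \<Rightarrow> ('c \<Rightarrow> 'c) \<Rightarrow> 'c \<Rightarrow> 'c \<Rightarrow> bit fps" where
  "borel_matrix A \<iota> = (\<lambda>x y. fps_const (A x y) + fps_X * (mat_one x (\<iota> y) + mat_one x y))"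

lemma borel_d_eq_mat_apply: "borel_d A \<iota> = mat_apply (borel_matrix A \<iota>)"
proof (intro ext)
  fix v y
  have "mat_apply (borel_matrix A \<iota>) v y = (\<Sum>x\<in>UNIV. fps_const (A x y) * v x)
      + fps_X * ((\<Sum>x\<in>UNIV. mat_one x (\<iota> y) * v x) + (\<Sum>x\<in>UNIV. mat_one x y * v x))"
    unfolding mat_apply_def borel_matrix_def
    by (simp only: distrib_right sum.distrib sum_distrib_left distrib_left mult.assoc)
  also have "\<dots> = (\<Sum>x\<in>UNIV. fps_const (A x y) * v x) + fps_X * (v (\<iota> y) + v y)"
    by (simp only: sum_mat_one)
  finally show "borel_d A \<iota> v y = mat_apply (borel_matrix A \<iota>) v y"
    unfolding borel_d_def iota_morse_def mat_apply_def by (simp add: bit_fps_diff_eq_add mult.commute)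
qed

lemma mat_reduce_borel_matrix: "mat_reduce (borel_matrix A \<iota>) = A"
  unfolding mat_reduce_def borel_matrix_def by (auto intro!: ext)

lemma borel_matrix_square_zero:
  assumes invol: "\<And>x. \<iota> (\<iota> x) = x"
    and dd: "\<And>x z. (\<Sum>y\<in>UNIV. A x y * A y z) = 0"
    and equiv: "\<And>x y. A (\<iota> x) (\<iota> y) = A x y"
  shows "mat_mult (borel_matrix A \<iota>) (borel_matrix A \<iota>) = (\<lambda>_ _. 0)"
proof (intro ext)
  fix x z
  let ?I = "\<lambda>x y. mat_one x (\<iota> y) + mat_one x y :: bit fps"
  have expand: "(\<Sum>y\<in>UNIV. (a y + fps_X * b y) * (c y + fps_X * d y)) =
      (\<Sum>y\<in>UNIV. a y * c y) + fps_X * ((\<Sum>y\<in>UNIV. a y * d y) + (\<Sum>y\<in>UNIV. b y * c y))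
      + fps_X * fps_X * (\<Sum>y\<in>UNIV. b y * d y)" for a b c d :: "'c \<Rightarrow> bit fps"
    by (simp add: algebra_simps sum.distrib sum_distrib_left)
  have AA: "(\<Sum>y\<in>UNIV. fps_const (A x y) * fps_const (A y z)) = 0"
    using dd[of x z] by (simp only: fps_const_mult fps_const_sum[symmetric]) simp
  have AI: "(\<Sum>y\<in>UNIV. fps_const (A x y) * ?I y z) = fps_const (A x (\<iota> z)) + fps_const (A x z)"
    by (simp only: distrib_left sum.distrib sum_mat_one)
  have IA: "(\<Sum>y\<in>UNIV. ?I x y * fps_const (A y z)) = fps_const (A (\<iota> x) z) + fps_const (A x z)"
    by (simp only: mat_one_involution[OF invol] distrib_right sum.distrib sum_mat_one)
  have II: "(\<Sum>y\<in>UNIV. ?I x y * ?I y z) = 0"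
  proof -
    have "(\<Sum>y\<in>UNIV. ?I x y * ?I y z) =
        (mat_one (\<iota> x) (\<iota> z) + mat_one (\<iota> x) z) + (mat_one x (\<iota> z) + mat_one x z)"
      by (simp only: mat_one_involution[OF invol] distrib_right sum.distrib sum_mat_one)
    also have "\<dots> = (mat_one x z + mat_one x (\<iota> z)) + (mat_one x (\<iota> z) + mat_one x z)"
      by (simp only: mat_one_involution[OF invol, symmetric] invol add.commute)
    also have "\<dots> = 0" by (simp only: add.commute[of "mat_one x (\<iota> z)"] bit_fps_add_self)
    finally show ?thesis .
  qed
  have "A (\<iota> x) z = A x (\<iota> z)" by (metis equiv invol)
  then show "mat_mult (borel_matrix A \<iota>) (borel_matrix A \<iota>) x z = 0"
    unfolding mat_mult_def borel_matrix_def expand AA AI IA II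
    by (simp only: bit_fps_add_self add_0_left add_0_right mult_zero_right)
qed

section \<open>Reduction modulo \<open>q\<close>\<close>

lemma similar_mat_reduce:
  fixes D N :: "'c::finite \<Rightarrow> 'c \<Rightarrow> 'a::comm_ring_1 fps"
  assumes "similar D N"
  shows "similar (mat_reduce D) (mat_reduce N)"
proof -
  obtain P Q where "mat_mult P Q = mat_one" "mat_mult Q P = mat_one" "mat_mult P D = mat_mult N P"
    using assms unfolding similar_def by blast
  then show ?thesis
    unfolding similar_def
    by (intro exI[of _ "mat_reduce P"] exI[of _ "mat_reduce Q"])
      (simp flip: mat_reduce_mat_mult add: mat_reduce_one)
qed

lemma normal_form_mat_reduce:
  fixes N :: "'c \<Rightarrow> 'c \<Rightarrow> 'a::comm_ring_1 fps"
  assumes nf: "normal_form N"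
  shows "normal_form (mat_reduce N)"
proof -
  have nz: "mat_reduce N x y \<noteq> 0 \<Longrightarrow> N x y \<noteq> 0" for x y unfolding mat_reduce_def by auto
  show ?thesis unfolding normal_form_def
  proof (intro conjI allI impI)
    fix x y y' assume "mat_reduce N x y \<noteq> 0" "mat_reduce N x y' \<noteq> 0"
    then show "y = y'" using normal_form_row[OF nf] nz by blast
  next
    fix x x' y assume "mat_reduce N x y \<noteq> 0" "mat_reduce N x' y \<noteq> 0"
    then show "x = x'" using normal_form_col[OF nf] nz by blast
  next
    fix x y z assume "mat_reduce N x y \<noteq> 0"
    then have "N y z = 0" using normal_form_target_row[OF nf] nz by blast
    then show "mat_reduce N y z = 0" unfolding mat_reduce_def by simp
  qed
qed

text \<open>Modulo \<open>q\<close> the entries divisible by \<open>q\<close> vanish, so each of them frees its source and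
  its target.\<close>

definition torsion_entries :: "('c \<Rightarrow> 'c \<Rightarrow> 'a::comm_ring_1 fps) \<Rightarrow> ('c \<times> 'c) set" where
  "torsion_entries N = {(x, y). N x y \<noteq> 0 \<and> N x y $ 0 = 0}"

context
  fixes N :: "'c \<Rightarrow> 'c \<Rightarrow> 'a::comm_ring_1 fps"
  assumes nf: "normal_form N"
begin

lemma sources_diff_mat_reduce: "sources N - sources (mat_reduce N) = fst ` torsion_entries N"
proof (intro set_eqI iffI)
  fix x assume x: "x \<in> sources N - sources (mat_reduce N)"
  then obtain y where "N x y \<noteq> 0" "N x y $ 0 = 0"
    unfolding sources_def mat_reduce_def by auto
  then show "x \<in> fst ` torsion_entries N"
    unfolding torsion_entries_def by (intro image_eqI[of _ _ "(x, y)"]) auto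
next
  fix x assume "x \<in> fst ` torsion_entries N"
  then obtain y where y: "N x y \<noteq> 0" "N x y $ 0 = 0" unfolding torsion_entries_def by auto
  have "N x y' $ 0 = 0" for y'
    using y normal_form_row[OF nf y(1), of y'] by (cases "N x y' = 0") auto
  then show "x \<in> sources N - sources (mat_reduce N)"
    using y unfolding sources_def mat_reduce_def by auto
qed

lemma targets_diff_mat_reduce: "targets N - targets (mat_reduce N) = snd ` torsion_entries N"
proof (intro set_eqI iffI)
  fix y assume "y \<in> targets N - targets (mat_reduce N)"
  then obtain x where "N x y \<noteq> 0" "N x y $ 0 = 0"
    unfolding targets_def mat_reduce_def by auto
  then show "y \<in> snd ` torsion_entries N"
    unfolding torsion_entries_def by (intro image_eqI[of _ _ "(x, y)"]) auto
next
  fix y assume "y \<in> snd ` torsion_entries N"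
  then obtain x where x: "N x y \<noteq> 0" "N x y $ 0 = 0" unfolding torsion_entries_def by auto
  have "N x' y $ 0 = 0" for x'
    using x normal_form_col[OF nf x(1), of x'] by (cases "N x' y = 0") auto
  then show "y \<in> targets N - targets (mat_reduce N)"
    using x unfolding targets_def mat_reduce_def by auto
qed

lemma card_fst_torsion_entries: "card (fst ` torsion_entries N) = card (torsion_entries N)"
  by (rule card_image, rule inj_onI) (auto simp: torsion_entries_def dest: normal_form_row[OF nf])

lemma card_snd_torsion_entries: "card (snd ` torsion_entries N) = card (torsion_entries N)"
  by (rule card_image, rule inj_onI) (auto simp: torsion_entries_def dest: normal_form_col[OF nf])

end

lemma card_unpaired_mat_reduce:
  fixes N :: "'c::finite \<Rightarrow> 'c \<Rightarrow> bit fps"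
  assumes nf: "normal_form N"
  shows "card (unpaired (mat_reduce N)) = card (unpaired N) + 2 * card (torsion_targets N)"
proof -
  let ?N0 = "mat_reduce N"
  have nz: "f $ 0 \<noteq> 0 \<Longrightarrow> f \<noteq> 0" for f :: "bit fps" by auto
  have "sources ?N0 \<subseteq> sources N" "targets ?N0 \<subseteq> targets N"
    unfolding sources_def targets_def mat_reduce_def using nz by blast+
  then have unpaired_eq: "unpaired ?N0 = unpaired N \<union> (sources N - sources ?N0) \<union> (targets N - targets ?N0)"
    unfolding unpaired_def using sources_targets_disjoint[OF nf] by blast
  have "torsion_targets N = snd ` torsion_entries N"
    unfolding torsion_targets_def torsion_entries_def by force
  then have card_torsion: "card (torsion_targets N) = card (torsion_entries N)"
    using card_snd_torsion_entries[OF nf] by simp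
  have "card (unpaired ?N0) = card (unpaired N) + card (sources N - sources ?N0) + card (targets N - targets ?N0)"
    unfolding unpaired_eq using sources_targets_disjoint[OF nf]
    by (subst card_Un_disjoint; (subst card_Un_disjoint)?) (auto simp: unpaired_def)
  then show ?thesis
    unfolding sources_diff_mat_reduce[OF nf] targets_diff_mat_reduce[OF nf]
      card_fst_torsion_entries[OF nf] card_snd_torsion_entries[OF nf] card_torsion
    by simp
qed

lemma borel_cohomology_sets:
  "borel_cocycles A \<iota> = cocycles (borel_matrix A \<iota>)"
  "borel_coboundaries A \<iota> = coboundaries (borel_matrix A \<iota>)"
  "borel_torsion A \<iota> = torsion_cocycles (borel_matrix A \<iota>)"
  unfolding borel_cocycles_def borel_coboundaries_def borel_torsion_def
    cocycles_def coboundaries_def torsion_cocycles_def borel_d_eq_mat_apply by simp_all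

lemma morse_cohomology_sets:
  "{v. morse_d A v = (\<lambda>_. 0)} = cocycles A"
  "range (morse_d A) = coboundaries A"
  unfolding cocycles_def coboundaries_def morse_d_def by simp_all

theorem lemma2p10:
  fixes A :: "'c::finite \<Rightarrow> 'c \<Rightarrow> bit" and \<iota> :: "'c \<Rightarrow> 'c" and ind :: "'c \<Rightarrow> nat"
  assumes invol: "\<And>x. \<iota> (\<iota> x) = x"
    and ind_inv: "\<And>x. ind (\<iota> x) = ind x"
    and deg: "\<And>x y. A x y \<noteq> 0 \<Longrightarrow> ind y = ind x + 1"
    and dd: "\<And>x z. (\<Sum>y\<in>UNIV. A x y * A y z) = 0"
    and equiv: "\<And>x y. A (\<iota> x) (\<iota> y) = A x y"
  shows "r_free A \<iota> + 2 * r_tor A \<iota> = dim_morse_cohomology A"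
proof -
  obtain N where sim: "similar (borel_matrix A \<iota>) N" and nf: "normal_form N"
    using normal_form_exists[OF borel_matrix_square_zero[OF invol dd equiv]] by blast
  have sim_reduced: "similar A (mat_reduce N)"
    using similar_mat_reduce[OF sim] unfolding mat_reduce_borel_matrix .
  have "r_free A \<iota> = card (unpaired N)"
    unfolding r_free_def borel_cohomology_sets min_gens_similar(1)[OF sim]
    by (rule min_gens_free_part_normal_form[OF nf])
  moreover have "r_tor A \<iota> = card (torsion_targets N)"
    unfolding r_tor_def borel_cohomology_sets min_gens_similar(2)[OF sim]
    by (rule min_gens_torsion_part_normal_form[OF nf])
  moreover have "dim_morse_cohomology A = card (unpaired (mat_reduce N))"
    unfolding dim_morse_cohomology_def morse_cohomology_sets min_gens_similar(3)[OF sim_reduced]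
    by (rule min_gens_cohomology_normal_form_bit[OF normal_form_mat_reduce[OF nf]])
  ultimately show ?thesis using card_unpaired_mat_reduce[OF nf] by simp
qed

end
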